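(* Let $\Gamma$ be a countable group and let $\mathcal P\subseteq\mathrm{Sub}(\Gamma)$ be a nonempty $\Gamma$-invariant $G_\delta$ subset (hence Polish for the induced topology). Assume that $\mathcal{HT}(\Gamma)\cap\mathcal P$ is dense in $\mathcal P$ and that the conjugation action of $\Gamma$ on $\mathcal P$ is topologically transitive. Then the action of $\Gamma$ on $\mathcal P$ is highly topologically transitive.
   Context: $\mathrm{Sub}(\Gamma)$ is the set of subgroups of $\Gamma$ with the topology generated by the clopen sets $\{\Lambda:\mathcal I\subseteq\Lambda,\ \mathcal O\cap\Lambda=\emptyset\}$ with $\mathcal I,\mathcal O\subseteq\Gamma$ finite; $\Gamma$ acts on it by conjugation, $\Lambda\cdot\gamma=\gamma^{-1}\Lambda\gamma$. $\mathcal{HT}(\Gamma)$ is the set of infinite index subgroups $\Lambda$ such that the right-multiplication action $\Lambda\backslash\Gamma\curvearrowleft\Gamma$ is highly transitive (for all $d$, all pairwise distinct $x_1,..,x_d$ and pairwise distinct $y_1,..,y_d$ there is $\gamma$ with $x_i\gamma=y_i$). For an action by homeomorphisms on a Hausdorff space $X$: it is topologically transitive if for all nonempty open $U,V$ there is $\gamma$ with $U\gamma\cap V\ne\emptyset$; for $d\ge1$ it is $d$-topologically transitive if the diagonal action on $X^{(d)}=\{(x_1,\dots,x_d)\in X^d: x_i\neq x_j \text{ for } i\neq j\}$ (with the topology induced from $X^d$) is topologically transitive; if $X$ is infinite it is highly topologically transitive if it is $d$-topologically transitive for all $d\ge1$. *)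

theory Defs
  imports "HOL-Analysis.Analysis" "HOL-Algebra.Coset"
begin

definition Sub :: "('a, 'b) monoid_scheme \<Rightarrow> 'a set set" where
  "Sub G = {L. subgroup L G}"

definition sub_topology :: "('a, 'b) monoid_scheme \<Rightarrow> 'a set topology" where
  "sub_topology G = topology_generated_by
     {{L \<in> Sub G. I \<subseteq> L \<and> J \<inter> L = {}} | I J.
        finite I \<and> finite J \<and> I \<subseteq> carrier G \<and> J \<subseteq> carrier G}"

definition conj_act :: "('a, 'b) monoid_scheme \<Rightarrow> 'a \<Rightarrow> 'a set \<Rightarrow> 'a set" where
  "conj_act G g L = (\<lambda>h. inv\<^bsub>G\<^esub> g \<otimes>\<^bsub>G\<^esub> h \<otimes>\<^bsub>G\<^esub> g) ` L"

definition highly_transitive_cosets :: "('a, 'b) monoid_scheme \<Rightarrow> 'a set \<Rightarrow> bool" where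
  "highly_transitive_cosets G L \<longleftrightarrow>
     (\<forall>xs ys. length xs = length ys \<and> distinct xs \<and> distinct ys \<and>
        set xs \<subseteq> rcosets\<^bsub>G\<^esub> L \<and> set ys \<subseteq> rcosets\<^bsub>G\<^esub> L \<longrightarrow>
        (\<exists>g\<in>carrier G. map (\<lambda>X. X #>\<^bsub>G\<^esub> g) xs = ys))"

definition HT :: "('a, 'b) monoid_scheme \<Rightarrow> 'a set set" where
  "HT G = {L. subgroup L G \<and> infinite (rcosets\<^bsub>G\<^esub> L) \<and> highly_transitive_cosets G L}"

definition top_transitive :: "'x topology \<Rightarrow> 'g set \<Rightarrow> ('g \<Rightarrow> 'x \<Rightarrow> 'x) \<Rightarrow> bool" where
  "top_transitive X A act \<longleftrightarrow>
     (\<forall>U V. openin X U \<and> U \<noteq> {} \<and> openin X V \<and> V \<noteq> {} \<longrightarrow>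
        (\<exists>g\<in>A. act g ` U \<inter> V \<noteq> {}))"

definition distinct_tuples :: "'x topology \<Rightarrow> nat \<Rightarrow> (nat \<Rightarrow> 'x) topology" where
  "distinct_tuples X d = subtopology (product_topology (\<lambda>_. X) {..<d})
     {f. inj_on f {..<d}}"

definition diag_act :: "('g \<Rightarrow> 'x \<Rightarrow> 'x) \<Rightarrow> nat \<Rightarrow> 'g \<Rightarrow> (nat \<Rightarrow> 'x) \<Rightarrow> (nat \<Rightarrow> 'x)" where
  "diag_act act d g f = restrict (\<lambda>i. act g (f i)) {..<d}"

definition d_top_transitive :: "nat \<Rightarrow> 'x topology \<Rightarrow> 'g set \<Rightarrow> ('g \<Rightarrow> 'x \<Rightarrow> 'x) \<Rightarrow> bool" where
  "d_top_transitive d X A act \<longleftrightarrow> top_transitive (distinct_tuples X d) A (diag_act act d)"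

definition highly_top_transitive :: "'x topology \<Rightarrow> 'g set \<Rightarrow> ('g \<Rightarrow> 'x \<Rightarrow> 'x) \<Rightarrow> bool" where
  "highly_top_transitive X A act \<longleftrightarrow>
     infinite (topspace X) \<and> (\<forall>d\<ge>1. d_top_transitive d X A act)"

end

theory Submission
  imports Defs "HOL-Algebra.Group_Action"
begin

(*
  Given nonempty open sets of P^(d), shrink them to products of pairwise disjoint open sets
  U_1, ..., U_d and V_1, ..., V_d (the space Sub(G) is Hausdorff). By topological transitivity
  the points of P whose orbit meets a fixed nonempty open set form a dense open set; the finitely
  many such sets for the U_i and V_i therefore have a dense open intersection, which contains
  some L in HT(G). Choose a_i, b_i with L^(a_i) in U_i and L^(b_i) in V_i. Since L^a is the
  stabiliser of the coset L a, the cosets L a_i are pairwise distinct, and so are the L b_i;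
  high transitivity of G on the cosets of L gives g with L a_i g = L b_i, whence
  (L^(a_i))^g = L^(b_i). The same stabiliser argument shows that the orbit of L is in bijection
  with the infinite coset space, so P is infinite.
*)

context group
begin

lemma mem_conj_act_iff:
  assumes "L \<subseteq> carrier G" "g \<in> carrier G" "h \<in> carrier G"
  shows "h \<in> conj_act G g L \<longleftrightarrow> g \<otimes> h \<otimes> inv g \<in> L"
proof
  assume "h \<in> conj_act G g L"
  then obtain k where "k \<in> L" "h = inv g \<otimes> k \<otimes> g"
    unfolding conj_act_def by blast
  moreover have "k \<in> carrier G"
    using \<open>k \<in> L\<close> assms(1) by blast
  ultimately show "g \<otimes> h \<otimes> inv g \<in> L"
    using assms by (simp add: m_assoc[symmetric]; simp add: m_assoc)
next
  assume "g \<otimes> h \<otimes> inv g \<in> L"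
  moreover have "h = inv g \<otimes> (g \<otimes> h \<otimes> inv g) \<otimes> g"
    using assms by (simp add: m_assoc; simp add: m_assoc[symmetric])
  ultimately show "h \<in> conj_act G g L"
    unfolding conj_act_def by blast
qed

lemma conj_act_subset_carrier:
  assumes "L \<subseteq> carrier G" "g \<in> carrier G"
  shows "conj_act G g L \<subseteq> carrier G"
  using assms unfolding conj_act_def by auto

lemma conj_act_conj_act:
  assumes "L \<subseteq> carrier G" "a \<in> carrier G" "g \<in> carrier G"
  shows "conj_act G g (conj_act G a L) = conj_act G (a \<otimes> g) L"
  unfolding conj_act_def image_image
proof (rule image_cong[OF refl])
  fix h assume "h \<in> L"
  with assms show "inv g \<otimes> (inv a \<otimes> h \<otimes> a) \<otimes> g = inv (a \<otimes> g) \<otimes> h \<otimes> (a \<otimes> g)"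
    by (auto simp: inv_mult_group m_assoc)
qed

lemma subgroup_conj_act:
  assumes "subgroup L G" "g \<in> carrier G"
  shows "subgroup (conj_act G g L) G"
proof -
  have "conj_act G g L = inv g <# L #> g"
    unfolding conj_act_def l_coset_def r_coset_def by auto
  then show ?thesis
    using subgroup_conjugation_is_surj1 assms by simp
qed

lemma rcos_fixed_iff_mem_conj_act:
  assumes "subgroup L G" "a \<in> carrier G" "g \<in> carrier G"
  shows "L #> a #> g = L #> a \<longleftrightarrow> g \<in> conj_act G a L"
proof -
  have L: "L \<subseteq> carrier G"
    using assms(1) by (rule subgroup.subset)
  have "L #> a #> g = L #> a \<longleftrightarrow> L #> a = L #> (a \<otimes> g)"
    using assms L by (auto simp: coset_mult_assoc)
  also have "\<dots> \<longleftrightarrow> a \<otimes> g \<in> L #> a"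
    using assms by (metis m_closed repr_independence repr_independenceD)
  also have "\<dots> \<longleftrightarrow> g \<in> conj_act G a L"
    using assms subgroup.rcos_module[OF assms(1) is_group] mem_conj_act_iff[OF L]
    by (simp add: m_assoc)
  finally show ?thesis .
qed

lemma conj_act_eq_if_rcos_eq:
  assumes "subgroup L G" "a \<in> carrier G" "b \<in> carrier G" "L #> a = L #> b"
  shows "conj_act G a L = conj_act G b L"
proof -
  have "conj_act G a L \<subseteq> carrier G" "conj_act G b L \<subseteq> carrier G"
    using assms(1-3) conj_act_subset_carrier subgroup.subset by blast+
  moreover have "g \<in> conj_act G a L \<longleftrightarrow> g \<in> conj_act G b L" if "g \<in> carrier G" for g
    using rcos_fixed_iff_mem_conj_act[OF assms(1,2) that] rcos_fixed_iff_mem_conj_act[OF assms(1,3) that]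
      assms(4) by simp
  ultimately show ?thesis
    by blast
qed

lemma HT_rcos_eq_iff_conj_act_eq:
  assumes "M \<in> HT G" "a \<in> carrier G" "b \<in> carrier G"
  shows "M #> a = M #> b \<longleftrightarrow> conj_act G a M = conj_act G b M"
proof
  assume "M #> a = M #> b"
  then show "conj_act G a M = conj_act G b M"
    using assms HT_def conj_act_eq_if_rcos_eq by blast
next
  assume conj_eq: "conj_act G a M = conj_act G b M"
  have M: "subgroup M G" "infinite (rcosets M)" "highly_transitive_cosets G M"
    using assms(1) unfolding HT_def by auto
  have cosets: "M #> a \<in> rcosets M" "M #> b \<in> rcosets M"
    using assms(2,3) rcosetsI[OF subgroup.subset[OF M(1)]] by auto
  show "M #> a = M #> b"
  proof (rule ccontr)
    assume ne: "M #> a \<noteq> M #> b"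
    obtain C where C: "C \<in> rcosets M" "C \<noteq> M #> a" "C \<noteq> M #> b"
      using infinite_imp_nonempty[of "rcosets M - {M #> a, M #> b}"] M(2) by auto
    \<comment> \<open>\<open>g\<close> lies in the stabiliser \<open>conj_act G a M\<close> of \<open>M #> a\<close> but not in that of \<open>M #> b\<close>.\<close>
    then obtain g where g: "g \<in> carrier G" "M #> a #> g = M #> a" "M #> b #> g = C"
      using M(3) cosets ne unfolding highly_transitive_cosets_def
      by (elim allE[of _ "[M #> a, M #> b]"] allE[of _ "[M #> a, C]"]) auto
    have "g \<in> conj_act G b M"
      using g conj_eq rcos_fixed_iff_mem_conj_act[OF M(1) assms(2)] by simp
    then have "M #> b #> g = M #> b"
      using g(1) rcos_fixed_iff_mem_conj_act[OF M(1) assms(3)] by blast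
    then show False
      using g(3) C(3) by simp
  qed
qed

lemma infinite_conj_act_orbit_HT:
  assumes "M \<in> HT G"
  shows "infinite ((\<lambda>g. conj_act G g M) ` carrier G)"
proof
  let ?orb = "\<lambda>g. conj_act G g M"
  assume "finite (?orb ` carrier G)"
  moreover have "rcosets M \<subseteq> (\<lambda>C. M #> inv_into (carrier G) ?orb C) ` ?orb ` carrier G"
  proof
    fix R assume "R \<in> rcosets M"
    then obtain a where a: "a \<in> carrier G" "R = M #> a"
      unfolding RCOSETS_def by blast
    have "?orb a \<in> ?orb ` carrier G"
      using a(1) by blast
    then have "inv_into (carrier G) ?orb (?orb a) \<in> carrier G"
         "?orb (inv_into (carrier G) ?orb (?orb a)) = ?orb a"
      by (rule inv_into_into, rule f_inv_into_f)
    then have "M #> inv_into (carrier G) ?orb (?orb a) = R"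
      using HT_rcos_eq_iff_conj_act_eq[OF assms] a by blast
    then show "R \<in> (\<lambda>C. M #> inv_into (carrier G) ?orb C) ` ?orb ` carrier G"
      using a(1) by blast
  qed
  ultimately have "finite (rcosets M)"
    using finite_subset by blast
  then show False
    using assms unfolding HT_def by simp
qed

lemma HT_conj_act_tuple_transitive:
  fixes d :: nat
  assumes "M \<in> HT G" "\<And>i. i < d \<Longrightarrow> a i \<in> carrier G \<and> b i \<in> carrier G"
    and "inj_on (\<lambda>i. conj_act G (a i) M) {..<d}" "inj_on (\<lambda>i. conj_act G (b i) M) {..<d}"
  shows "\<exists>g\<in>carrier G. \<forall>i<d. conj_act G g (conj_act G (a i) M) = conj_act G (b i) M"
proof -
  have M: "subgroup M G" "highly_transitive_cosets G M"
    using assms(1) unfolding HT_def by auto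
  have M_carrier: "M \<subseteq> carrier G"
    using M(1) by (rule subgroup.subset)
  let ?xs = "map (\<lambda>i. M #> a i) [0..<d]" and ?ys = "map (\<lambda>i. M #> b i) [0..<d]"
  have "inj_on (\<lambda>i. M #> a i) {..<d}" "inj_on (\<lambda>i. M #> b i) {..<d}"
    using assms(3,4) HT_rcos_eq_iff_conj_act_eq[OF assms(1)] assms(2)
    unfolding inj_on_def by (meson lessThan_iff)+
  then have "distinct ?xs" "distinct ?ys"
    by (simp_all add: distinct_map atLeast0LessThan)
  moreover have "set ?xs \<subseteq> rcosets M" "set ?ys \<subseteq> rcosets M"
    using assms(2) rcosetsI[OF M_carrier] by auto
  ultimately have "\<exists>g\<in>carrier G. map (\<lambda>R. R #> g) ?xs = ?ys"
    by (intro M(2)[unfolded highly_transitive_cosets_def, rule_format]) simp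
  then obtain g where g: "g \<in> carrier G" "map (\<lambda>R. R #> g) ?xs = ?ys"
    by blast
  have "conj_act G g (conj_act G (a i) M) = conj_act G (b i) M" if "i < d" for i
  proof -
    have ab: "a i \<in> carrier G" "b i \<in> carrier G"
      using assms(2) that by auto
    have "M #> (a i \<otimes> g) = M #> a i #> g"
      using coset_mult_assoc[OF M_carrier ab(1) g(1)] by simp
    also have "\<dots> = M #> b i"
      using g(2) that by (simp add: map_eq_conv)
    finally have "conj_act G (a i \<otimes> g) M = conj_act G (b i) M"
      using conj_act_eq_if_rcos_eq[OF M(1)] ab g(1) by blast
    then show ?thesis
      using conj_act_conj_act[OF M_carrier ab(1) g(1)] by simp
  qed
  then show ?thesis
    using g(1) by blast
qed

end

lemma topspace_sub_topology [simp]: "topspace (sub_topology G) = Sub G"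
proof -
  have "L \<in> {M \<in> Sub G. {} \<subseteq> M \<and> {} \<inter> M = {}}" if "L \<in> Sub G" for L
    using that by simp
  then show ?thesis
    unfolding sub_topology_def topology_generated_by_topspace by blast
qed

lemma openin_sub_topology_basis:
  assumes "finite I" "finite J" "I \<subseteq> carrier G" "J \<subseteq> carrier G"
  shows "openin (sub_topology G) {L \<in> Sub G. I \<subseteq> L \<and> J \<inter> L = {}}"
  unfolding sub_topology_def
  by (rule topology_generated_by_Basis) (use assms in blast)

lemma openin_sub_topology_mem_iff:
  assumes "h \<in> carrier G"
  shows "openin (sub_topology G) {L \<in> Sub G. h \<in> L \<longleftrightarrow> b}"
  using openin_sub_topology_basis[of "{h}" "{}" G] openin_sub_topology_basis[of "{}" "{h}" G] assms
  by (cases b) simp_all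

lemma Hausdorff_space_sub_topology: "Hausdorff_space (sub_topology G)"
  unfolding Hausdorff_space_def topspace_sub_topology
proof (intro allI impI, elim conjE)
  fix L L' assume L: "L \<in> Sub G" "L' \<in> Sub G" "L \<noteq> L'"
  then obtain h where h: "(h \<in> L) \<noteq> (h \<in> L')"
    unfolding set_eq_iff by blast
  moreover have "L \<union> L' \<subseteq> carrier G"
    using L(1,2) unfolding Sub_def by (simp add: subgroup.subset)
  ultimately have "h \<in> carrier G"
    by blast
  let ?U = "{M \<in> Sub G. h \<in> M \<longleftrightarrow> h \<in> L}" and ?V = "{M \<in> Sub G. h \<in> M \<longleftrightarrow> h \<in> L'}"
  have "openin (sub_topology G) ?U" "openin (sub_topology G) ?V"
    using \<open>h \<in> carrier G\<close> by (rule openin_sub_topology_mem_iff)+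
  moreover have "L \<in> ?U" "L' \<in> ?V" "disjnt ?U ?V"
    using L(1,2) h by (auto simp: disjnt_def)
  ultimately show "\<exists>U V. openin (sub_topology G) U \<and> openin (sub_topology G) V \<and> L \<in> U \<and> L' \<in> V \<and> disjnt U V"
    by blast
qed

lemma (in group) conj_act_in_basis_iff:
  assumes "g \<in> carrier G" "L \<in> Sub G" "I \<subseteq> carrier G" "J \<subseteq> carrier G"
  shows "I \<subseteq> conj_act G g L \<and> J \<inter> conj_act G g L = {} \<longleftrightarrow>
    (\<lambda>h. g \<otimes> h \<otimes> inv g) ` I \<subseteq> L \<and> (\<lambda>h. g \<otimes> h \<otimes> inv g) ` J \<inter> L = {}"
proof -
  have "L \<subseteq> carrier G"
    using assms(2) unfolding Sub_def by (simp add: subgroup.subset)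
  then have "h \<in> conj_act G g L \<longleftrightarrow> g \<otimes> h \<otimes> inv g \<in> L" if "h \<in> carrier G" for h
    using mem_conj_act_iff assms(1) that by blast
  then show ?thesis
    using subsetD[OF assms(3)] subsetD[OF assms(4)] by (auto simp: subset_iff)
qed

lemma (in group) continuous_map_conj_act:
  assumes "g \<in> carrier G"
  shows "continuous_map (sub_topology G) (sub_topology G) (conj_act G g)"
proof -
  define \<B> where "\<B> = {{L \<in> Sub G. I \<subseteq> L \<and> J \<inter> L = {}} | I J.
    finite I \<and> finite J \<and> I \<subseteq> carrier G \<and> J \<subseteq> carrier G}"
  have sub_top: "sub_topology G = topology_generated_by \<B>"
    unfolding sub_topology_def \<B>_def ..
  have conj_Sub: "conj_act G g L \<in> Sub G" if "L \<in> Sub G" for L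
    using subgroup_conj_act[OF _ assms] that unfolding Sub_def by simp
  have "continuous_map (sub_topology G) (topology_generated_by \<B>) (conj_act G g)"
  proof (rule continuous_on_generated_topo)
    fix U assume "U \<in> \<B>"
    then obtain I J where IJ: "finite I" "finite J" "I \<subseteq> carrier G" "J \<subseteq> carrier G"
      and U: "U = {L \<in> Sub G. I \<subseteq> L \<and> J \<inter> L = {}}"
      unfolding \<B>_def by blast
    let ?c = "\<lambda>h. g \<otimes> h \<otimes> inv g"
    have "conj_act G g L \<in> U \<longleftrightarrow> ?c ` I \<subseteq> L \<and> ?c ` J \<inter> L = {}" if "L \<in> Sub G" for L
      using conj_Sub[OF that] conj_act_in_basis_iff[OF assms that IJ(3,4)] unfolding U by blast
    then have "conj_act G g -` U \<inter> topspace (sub_topology G) =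
        {L \<in> Sub G. ?c ` I \<subseteq> L \<and> ?c ` J \<inter> L = {}}"
      unfolding topspace_sub_topology by blast
    moreover have "openin (sub_topology G) {L \<in> Sub G. ?c ` I \<subseteq> L \<and> ?c ` J \<inter> L = {}}"
      using IJ assms by (intro openin_sub_topology_basis) auto
    ultimately show "openin (sub_topology G) (conj_act G g -` U \<inter> topspace (sub_topology G))"
      by simp
  next
    have "\<Union>\<B> = Sub G"
      using topspace_sub_topology[of G] unfolding sub_top by simp
    then show "conj_act G g ` topspace (sub_topology G) \<subseteq> \<Union>\<B>"
      using conj_Sub by auto
  qed
  then show ?thesis
    unfolding sub_top .
qed

lemma openin_dense_Inter_finite:
  assumes "finite \<F>" "\<And>S. S \<in> \<F> \<Longrightarrow> openin X S \<and> X closure_of S = topspace X"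
  shows "openin X (topspace X \<inter> \<Inter>\<F>) \<and> X closure_of (topspace X \<inter> \<Inter>\<F>) = topspace X"
  using assms
proof (induction \<F> rule: finite_induct)
  case empty
  then show ?case by simp
next
  case (insert S \<F>)
  let ?T = "topspace X \<inter> \<Inter>\<F>"
  have S: "openin X S" "X closure_of S = topspace X" and T: "openin X ?T" "X closure_of ?T = topspace X"
    using insert by auto
  have "topspace X \<inter> \<Inter>(insert S \<F>) = S \<inter> ?T"
    using openin_subset[OF S(1)] by auto
  moreover have "X closure_of (S \<inter> ?T) = topspace X"
    using closure_of_openin_Int_superset[of X S ?T] S T openin_subset[OF S(1)] by simp
  ultimately show ?case
    using S(1) T(1) by auto
qed

lemma openin_dense_orbit_meets:
  assumes "top_transitive X A act" "\<And>g. g \<in> A \<Longrightarrow> continuous_map X X (act g)"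
    and "openin X V" "V \<noteq> {}"
  shows "openin X {x \<in> topspace X. \<exists>g\<in>A. act g x \<in> V} \<and>
    X closure_of {x \<in> topspace X. \<exists>g\<in>A. act g x \<in> V} = topspace X"
proof
  have "{x \<in> topspace X. \<exists>g\<in>A. act g x \<in> V} = (\<Union>g\<in>A. {x \<in> topspace X. act g x \<in> V})"
    by auto
  then show "openin X {x \<in> topspace X. \<exists>g\<in>A. act g x \<in> V}"
    using openin_continuous_map_preimage[OF assms(2) assms(3)] by auto
next
  show "X closure_of {x \<in> topspace X. \<exists>g\<in>A. act g x \<in> V} = topspace X"
    unfolding dense_intersects_open
  proof (intro allI impI)
    fix U assume U: "openin X U \<and> U \<noteq> {}"
    then obtain g x where "g \<in> A" "x \<in> U" "act g x \<in> V"
      using assms(1,3,4) unfolding top_transitive_def by blast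
    then show "{x \<in> topspace X. \<exists>g\<in>A. act g x \<in> V} \<inter> U \<noteq> {}"
      using openin_subset U by blast
  qed
qed

lemma dense_point_orbit_meets_all:
  assumes "top_transitive X A act" "\<And>g. g \<in> A \<Longrightarrow> continuous_map X X (act g)"
    and "topspace X \<noteq> {}" "X closure_of D = topspace X"
    and "finite \<W>" "\<And>W. W \<in> \<W> \<Longrightarrow> openin X W \<and> W \<noteq> {}"
  shows "\<exists>z\<in>D. \<exists>c. \<forall>W\<in>\<W>. c W \<in> A \<and> act (c W) z \<in> W"
proof -
  define visitors where "visitors W = {x \<in> topspace X. \<exists>g\<in>A. act g x \<in> W}" for W
  let ?O = "topspace X \<inter> \<Inter>(visitors ` \<W>)"
  have "openin X ?O \<and> X closure_of ?O = topspace X"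
  proof (rule openin_dense_Inter_finite)
    show "finite (visitors ` \<W>)"
      using assms(5) by simp
    show "openin X S \<and> X closure_of S = topspace X" if "S \<in> visitors ` \<W>" for S
      using that assms(6) openin_dense_orbit_meets[OF assms(1,2)] unfolding visitors_def by blast
  qed
  then have O: "openin X ?O" "X closure_of ?O = topspace X"
    by blast+
  moreover have "?O \<noteq> {}"
  proof
    assume "?O = {}"
    then show False
      using O(2) assms(3) by simp
  qed
  ultimately have "D \<inter> ?O \<noteq> {}"
    using assms(4) by (meson dense_intersects_open)
  then obtain z where "z \<in> D" "z \<in> \<Inter>(visitors ` \<W>)"
    by blast
  then have "\<forall>W\<in>\<W>. \<exists>g. g \<in> A \<and> act g z \<in> W"
    unfolding visitors_def by blast
  then show ?thesis
    using \<open>z \<in> D\<close> bchoice by fast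
qed

lemma inj_on_if_pairwise_disjnt:
  assumes "\<And>i. i \<in> I \<Longrightarrow> f i \<in> W i" "\<And>i j. i \<in> I \<Longrightarrow> j \<in> I \<Longrightarrow> i \<noteq> j \<Longrightarrow> disjnt (W i) (W j)"
  shows "inj_on f I"
proof (rule inj_onI, rule ccontr)
  fix i j assume "i \<in> I" "j \<in> I" "f i = f j" "i \<noteq> j"
  then have "f i \<in> W i \<inter> W j"
    using assms(1)[of i] assms(1)[of j] by simp
  then show False
    using assms(2) \<open>i \<in> I\<close> \<open>j \<in> I\<close> \<open>i \<noteq> j\<close> by (auto simp: disjnt_def)
qed

lemma distinct_tuples_open_contains_disjoint_box:
  assumes "Hausdorff_space X" "openin (distinct_tuples X d) \<U>" "x \<in> \<U>"
  obtains U where "\<And>i. i < d \<Longrightarrow> openin X (U i) \<and> x i \<in> U i"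
    and "\<And>i j. i < d \<Longrightarrow> j < d \<Longrightarrow> i \<noteq> j \<Longrightarrow> disjnt (U i) (U j)"
    and "(\<Pi>\<^sub>E i\<in>{..<d}. U i) \<subseteq> \<U>"
proof -
  obtain W where W: "openin (product_topology (\<lambda>_. X) {..<d}) W" "\<U> = W \<inter> {f. inj_on f {..<d}}"
    using assms(2) unfolding distinct_tuples_def openin_subtopology by blast
  have "x \<in> W" "inj_on x {..<d}"
    using assms(3) W(2) by auto
  obtain Y where Y: "x \<in> (\<Pi>\<^sub>E i\<in>{..<d}. Y i)" "\<And>i. openin X (Y i)" "(\<Pi>\<^sub>E i\<in>{..<d}. Y i) \<subseteq> W"
    using product_topology_open_contains_basis[OF W(1) \<open>x \<in> W\<close>] by blast
  have "\<exists>S T. openin X S \<and> openin X T \<and> x i \<in> S \<and> x j \<in> T \<and> disjnt S T"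
    if "i < d" "j < d" "i \<noteq> j" for i j
  proof -
    have "x i \<in> topspace X" "x j \<in> topspace X"
      using Y(1,2) that openin_subset by (fastforce simp: PiE_iff)+
    moreover have "x i \<noteq> x j"
      using \<open>inj_on x {..<d}\<close> that by (auto simp: inj_on_def)
    ultimately show ?thesis
      using assms(1) unfolding Hausdorff_space_def by blast
  qed
  then obtain S T where ST: "\<And>i j. i < d \<Longrightarrow> j < d \<Longrightarrow> i \<noteq> j \<Longrightarrow>
      openin X (S i j) \<and> openin X (T i j) \<and> x i \<in> S i j \<and> x j \<in> T i j \<and> disjnt (S i j) (T i j)"
    by metis
  define U where "U i = Y i \<inter> (\<Inter>j \<in> {..<d} - {i}. S i j \<inter> T j i)" for i
  have U: "openin X (U i) \<and> x i \<in> U i" if "i < d" for i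
    using ST Y that unfolding U_def by (auto intro!: openin_Int_Inter simp: PiE_iff)
  have disj: "disjnt (U i) (U j)" if "i < d" "j < d" "i \<noteq> j" for i j
  proof -
    have "U i \<subseteq> S i j" "U j \<subseteq> T i j"
      using that unfolding U_def by auto
    then show ?thesis
      using ST[OF that] disjnt_subset1 disjnt_subset2 by meson
  qed
  have "(\<Pi>\<^sub>E i\<in>{..<d}. U i) \<subseteq> \<U>"
  proof
    fix f assume f: "f \<in> (\<Pi>\<^sub>E i\<in>{..<d}. U i)"
    then have "f \<in> (\<Pi>\<^sub>E i\<in>{..<d}. Y i)"
      unfolding U_def by (auto simp: PiE_iff)
    then have "f \<in> W"
      using Y(3) by blast
    moreover have "inj_on f {..<d}"
      by (rule inj_on_if_pairwise_disjnt[where W = U]) (use f disj in auto)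
    ultimately show "f \<in> \<U>"
      using W(2) by blast
  qed
  then show thesis
    using that U disj by blast
qed

lemma d_top_transitive_if_dense_orbit_transitive:
  fixes d :: nat and act :: "'g \<Rightarrow> 'x \<Rightarrow> 'x"
  assumes "Hausdorff_space X" "topspace X \<noteq> {}"
    and "top_transitive X A act" "\<And>g. g \<in> A \<Longrightarrow> continuous_map X X (act g)"
    and "X closure_of D = topspace X"
    and orbit_transitive: "\<And>z a b. z \<in> D \<Longrightarrow> (\<And>i. i < d \<Longrightarrow> a i \<in> A \<and> b i \<in> A) \<Longrightarrow>
      inj_on (\<lambda>i. act (a i) z) {..<d} \<Longrightarrow> inj_on (\<lambda>i. act (b i) z) {..<d} \<Longrightarrow>
      \<exists>g\<in>A. \<forall>i<d. act g (act (a i) z) = act (b i) z"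
  shows "d_top_transitive d X A act"
  unfolding d_top_transitive_def top_transitive_def
proof (intro allI impI, elim conjE)
  fix \<U> \<V>
  assume \<U>: "openin (distinct_tuples X d) \<U>" "\<U> \<noteq> {}" and \<V>: "openin (distinct_tuples X d) \<V>" "\<V> \<noteq> {}"
  obtain x y where "x \<in> \<U>" "y \<in> \<V>"
    using \<U>(2) \<V>(2) by blast
  obtain U where U: "\<And>i. i < d \<Longrightarrow> openin X (U i) \<and> x i \<in> U i"
    "\<And>i j. i < d \<Longrightarrow> j < d \<Longrightarrow> i \<noteq> j \<Longrightarrow> disjnt (U i) (U j)" "(\<Pi>\<^sub>E i\<in>{..<d}. U i) \<subseteq> \<U>"
    using distinct_tuples_open_contains_disjoint_box[OF assms(1) \<U>(1) \<open>x \<in> \<U>\<close>] by blast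
  obtain V where V: "\<And>i. i < d \<Longrightarrow> openin X (V i) \<and> y i \<in> V i"
    "\<And>i j. i < d \<Longrightarrow> j < d \<Longrightarrow> i \<noteq> j \<Longrightarrow> disjnt (V i) (V j)" "(\<Pi>\<^sub>E i\<in>{..<d}. V i) \<subseteq> \<V>"
    using distinct_tuples_open_contains_disjoint_box[OF assms(1) \<V>(1) \<open>y \<in> \<V>\<close>] by blast
  have targets: "finite (U ` {..<d} \<union> V ` {..<d})"
    "\<And>W. W \<in> U ` {..<d} \<union> V ` {..<d} \<Longrightarrow> openin X W \<and> W \<noteq> {}"
    using U(1) V(1) by blast+
  obtain z where z: "z \<in> D"
    and witnesses: "\<exists>c. \<forall>W\<in>U ` {..<d} \<union> V ` {..<d}. c W \<in> A \<and> act (c W) z \<in> W"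
    using dense_point_orbit_meets_all[OF assms(3,4,2,5) targets] ..
  from witnesses obtain c where c: "\<forall>W\<in>U ` {..<d} \<union> V ` {..<d}. c W \<in> A \<and> act (c W) z \<in> W"
    ..
  have a: "c (U i) \<in> A \<and> act (c (U i)) z \<in> U i" and b: "c (V i) \<in> A \<and> act (c (V i)) z \<in> V i"
    if "i < d" for i
    using c that by auto
  have "inj_on (\<lambda>i. act (c (U i)) z) {..<d}" "inj_on (\<lambda>i. act (c (V i)) z) {..<d}"
    by (rule inj_on_if_pairwise_disjnt[where W = U], use a U(2) in auto)
      (rule inj_on_if_pairwise_disjnt[where W = V], use b V(2) in auto)
  then obtain g where g: "g \<in> A" "\<forall>i<d. act g (act (c (U i)) z) = act (c (V i)) z"
    using orbit_transitive[OF z, of "\<lambda>i. c (U i)" "\<lambda>i. c (V i)"] a b by blast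
  let ?t = "restrict (\<lambda>i. act (c (U i)) z) {..<d}"
  have "?t \<in> (\<Pi>\<^sub>E i\<in>{..<d}. U i)"
    using a by auto
  then have "?t \<in> \<U>"
    using U(3) by blast
  moreover have "diag_act act d g ?t = restrict (\<lambda>i. act (c (V i)) z) {..<d}"
    unfolding diag_act_def using g(2) by auto
  then have "diag_act act d g ?t \<in> (\<Pi>\<^sub>E i\<in>{..<d}. V i)"
    using b by auto
  then have "diag_act act d g ?t \<in> \<V>"
    using V(3) by blast
  ultimately show "\<exists>g\<in>A. diag_act act d g ` \<U> \<inter> \<V> \<noteq> {}"
    using g(1) by blast
qed

theorem theoremD:
  fixes G :: "('a, 'b) monoid_scheme" and P :: "'a set set"
  assumes "group G"
    and "countable (carrier G)"
    and "P \<subseteq> Sub G" and "P \<noteq> {}"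
    and "\<forall>g\<in>carrier G. \<forall>L\<in>P. conj_act G g L \<in> P"
    and "gdelta_in (sub_topology G) P"
    and "(subtopology (sub_topology G) P) closure_of (HT G \<inter> P) = P"
    and "top_transitive (subtopology (sub_topology G) P) (carrier G) (conj_act G)"
  shows "highly_top_transitive (subtopology (sub_topology G) P) (carrier G) (conj_act G)"
proof -
  interpret group G by fact
  let ?X = "subtopology (sub_topology G) P"
  have topspace: "topspace ?X = P"
    using assms(3) by auto
  have continuous: "continuous_map ?X ?X (conj_act G g)" if "g \<in> carrier G" for g
    using continuous_map_conj_act[OF that] assms(5) that topspace
    by (auto intro: continuous_map_into_subtopology continuous_map_from_subtopology)
  have dense: "?X closure_of (HT G \<inter> P) = topspace ?X"
    using assms(7) topspace by simp
  then have "HT G \<inter> P \<inter> topspace ?X \<noteq> {}"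
    using assms(4) topspace dense_intersects_open[of ?X] by (metis openin_topspace)
  then obtain M where "M \<in> HT G" "M \<in> P"
    by blast
  then have "infinite P"
    using infinite_conj_act_orbit_HT assms(5) by (meson image_subsetI infinite_super)
  moreover have "d_top_transitive d ?X (carrier G) (conj_act G)" for d
  proof (rule d_top_transitive_if_dense_orbit_transitive)
    show "Hausdorff_space ?X"
      by (simp add: Hausdorff_space_subtopology Hausdorff_space_sub_topology)
    show "\<exists>g\<in>carrier G. \<forall>i<d. conj_act G g (conj_act G (a i) M) = conj_act G (b i) M"
      if "M \<in> HT G \<inter> P" "\<And>i. i < d \<Longrightarrow> a i \<in> carrier G \<and> b i \<in> carrier G"
        "inj_on (\<lambda>i. conj_act G (a i) M) {..<d}" "inj_on (\<lambda>i. conj_act G (b i) M) {..<d}" for M a b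
      using HT_conj_act_tuple_transitive that by blast
  qed (use assms(4,8) dense topspace continuous in auto)
  ultimately show ?thesis
    unfolding highly_top_transitive_def using topspace by simp
qed

end
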